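(* Let $\theta\mapsto\mathcal E_\theta$ be a family of unital quantum channels on $d\times d$ matrices with Liouville representation $T_\theta$, and let $\theta_0$ be a parameter value. Suppose there exists a peripheral eigenvalue $\lambda_j$ of $T_\theta$ with $\dot\lambda_j\neq0$ whose associated eigenmatrix satisfies: either $\lim_{\theta\to\theta_0}R_j$ is Hermitian up to a multiplicative factor, or $\lim_{\theta\to\theta_0}\operatorname{Tr}(R_j^2)=0$. Then the sequential QFI of $N$ channels can achieve the Heisenberg limit at $\theta=\theta_0$: there exists an input state $\rho_0$ (independent of $N$) such that $\liminf_{N\to\infty}F^Q(\mathcal E_\theta^N(\rho_0))|_{\theta=\theta_0}/N^2>0$.
   Context: A quantum channel $\mathcal E_\theta(\rho)=\sum_iK_i^\theta\rho K_i^{\theta\dagger}$ (trace preserving) is unital if $\mathcal E_\theta(I)=I$. Its Liouville representation is $T_\theta=\sum_iK_i^\theta\otimes K_i^{\theta*}$, satisfying $T_\theta|\rho\rangle\rangle=|\mathcal E_\theta(\rho)\rangle\rangle$ with $|\rho\rangle\rangle=(\rho_{11},\rho_{12},\dots,\rho_{dd})^T$ and $\langle\langle A|B\rangle\rangle=\operatorname{Tr}(A^\dagger B)$. Peripheral eigenvalues of $T_\theta$ are those with modulus $1$; the eigenmatrix $R_j$ of an eigenvalue $\lambda_j$ is the matrix with $T_\theta|R_j\rangle\rangle=\lambda_j|R_j\rangle\rangle$. Eigenvalues and eigenmatrices are assumed continuously differentiable in $\theta$; a dot denotes $d/d\theta$. $F^Q(\rho_\theta)=\operatorname{Tr}(\rho_\theta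 L_{\rho_\theta}^2)$ is the quantum Fisher information with symmetric logarithmic derivative defined by $2\dot\rho_\theta=\rho_\theta L_{\rho_\theta}+L_{\rho_\theta}\rho_\theta$. No ancilla and no interleaved control are used. *)

theory Defs
  imports "HOL-Analysis.Analysis"
begin

text \<open>d x d complex matrices are modelled as complex^'n^'n with d = CARD('n).\<close>

definition adjoint_mat :: "complex^'n^'n \<Rightarrow> complex^'n^'n" where
  "adjoint_mat A = (\<chi> i j. cnj (A $ j $ i))"

definition smult_mat :: "complex \<Rightarrow> complex^'n^'n \<Rightarrow> complex^'n^'n" where
  "smult_mat c A = (\<chi> i j. c * A $ i $ j)"

definition hermitian_mat :: "complex^'n^'n \<Rightarrow> bool" where
  "hermitian_mat A \<longleftrightarrow> adjoint_mat A = A"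

definition psd_mat :: "complex^'n^'n \<Rightarrow> bool" where
  "psd_mat A \<longleftrightarrow> hermitian_mat A \<and>
     (\<forall>x::complex^'n. let q = (\<Sum>i\<in>UNIV. cnj (x $ i) * ((A *v x) $ i)) in Im q = 0 \<and> Re q \<ge> 0)"

definition density_matrix :: "complex^'n^'n \<Rightarrow> bool" where
  "density_matrix \<rho> \<longleftrightarrow> psd_mat \<rho> \<and> trace \<rho> = 1"

definition apply_channel :: "(nat \<Rightarrow> real \<Rightarrow> complex^'n^'n) \<Rightarrow> nat \<Rightarrow> real \<Rightarrow> complex^'n^'n \<Rightarrow> complex^'n^'n" where
  "apply_channel K m \<theta> \<rho> = (\<Sum>i<m. K i \<theta> ** \<rho> ** adjoint_mat (K i \<theta>))"

definition trace_preserving :: "(nat \<Rightarrow> real \<Rightarrow> complex^'n^'n) \<Rightarrow> nat \<Rightarrow> real \<Rightarrow> bool" where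
  "trace_preserving K m \<theta> \<longleftrightarrow> (\<Sum>i<m. adjoint_mat (K i \<theta>) ** K i \<theta>) = mat 1"

definition unital_channel :: "(nat \<Rightarrow> real \<Rightarrow> complex^'n^'n) \<Rightarrow> nat \<Rightarrow> real \<Rightarrow> bool" where
  "unital_channel K m \<theta> \<longleftrightarrow> apply_channel K m \<theta> (mat 1) = mat 1"

text \<open>Row-major vectorisation |rho>> = (rho_11, rho_12, ..., rho_dd), indexed by pairs.\<close>
definition vec_mat :: "complex^'n^'n \<Rightarrow> complex^('n \<times> 'n)" where
  "vec_mat \<rho> = (\<chi> p. \<rho> $ fst p $ snd p)"

text \<open>Liouville representation T = sum_i K_i (x) conj K_i.\<close>
definition liouville :: "(nat \<Rightarrow> real \<Rightarrow> complex^'n^'n) \<Rightarrow> nat \<Rightarrow> real \<Rightarrow> complex^('n \<times> 'n)^('n \<times> 'n)" where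
  "liouville K m \<theta> = (\<chi> p q. \<Sum>i<m. K i \<theta> $ fst p $ fst q * cnj (K i \<theta> $ snd p $ snd q))"

text \<open>QFI F^Q = Tr(rho L^2), L the (Hermitian) SLD: 2 rho' = rho L + L rho.\<close>
definition qfi :: "complex^'n^'n \<Rightarrow> complex^'n^'n \<Rightarrow> real" where
  "qfi \<rho> \<rho>' = (let L = (SOME L. hermitian_mat L \<and> 2 *\<^sub>R \<rho>' = \<rho> ** L + L ** \<rho>)
                 in Re (trace (\<rho> ** L ** L)))"

definition qfi_family :: "(real \<Rightarrow> complex^'n^'n) \<Rightarrow> real \<Rightarrow> real" where
  "qfi_family \<rho> \<theta>0 = qfi (\<rho> \<theta>0) (vector_derivative \<rho> (at \<theta>0))"

end

theory Submission
  imports Defs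
begin

text \<open>
  Differentiating \<open>E\<^sub>\<theta>\<^sup>N R\<^sub>\<theta> = \<lambda>\<^sub>\<theta>\<^sup>N R\<^sub>\<theta>\<close> at \<open>\<theta>\<^sub>0\<close> shows that the derivative \<open>D\<^sub>N\<close> of
  \<open>\<theta> \<mapsto> E\<^sub>\<theta>\<^sup>N R\<^sub>0\<close> is \<open>N \<lambda>\<^sup>N \<mu> R\<^sub>0\<close>, with \<open>\<mu> = \<lambda>'/\<lambda>\<close>, up to a bounded error: the iterates of a
  unital channel are uniformly bounded, since unitality keeps the numerical range of \<open>E\<^sup>N X\<close>
  inside that of \<open>X\<close>. For the probe \<open>\<rho>\<^sub>0 = I/d + \<epsilon> (R\<^sub>0 + R\<^sub>0\<^sup>\<dagger> - c I)\<close> the output state has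
  derivative \<open>\<epsilon> (D\<^sub>N + D\<^sub>N\<^sup>\<dagger>)\<close>, and when \<open>Tr R\<^sub>0\<^sup>2 = 0\<close> this Hermitian part still grows linearly
  in \<open>N\<close>. The output stays close to the maximally mixed state, where the QFI is at least a
  constant times the squared norm of the derivative; hence it is of order \<open>N\<^sup>2\<close>.

  The other alternative, \<open>R\<^sub>0\<close> a multiple of a Hermitian \<open>H\<close>, cannot occur: then \<open>\<lambda>(\<theta>\<^sub>0)\<close>
  is real, \<open>\<mu>\<close> is purely imaginary and nonzero, and the derivative of the Hermitian family
  \<open>E\<^sub>\<theta>\<^sup>N H\<close> would have an anti-Hermitian part growing linearly in \<open>N\<close>.
\<close>

lemma adjoint_mat_nth [simp]: "adjoint_mat A $ i $ j = cnj (A $ j $ i)"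
  by (simp add: adjoint_mat_def)

lemma smult_mat_nth [simp]: "smult_mat c A $ i $ j = c * A $ i $ j"
  by (simp add: smult_mat_def)

interpretation matrix_mult: bounded_bilinear "(**) :: complex^'n^'n \<Rightarrow> complex^'n^'n \<Rightarrow> complex^'n^'n"
proof -
  have "bilinear ((**) :: complex^'n^'n \<Rightarrow> complex^'n^'n \<Rightarrow> complex^'n^'n)"
    by (simp add: bilinear_def linear_iff matrix_add_ldistrib scalar_matrix_assoc matrix_scalar_ac)
       (simp add: vec_eq_iff matrix_matrix_mult_def sum.distrib algebra_simps)
  then show "bounded_bilinear ((**) :: complex^'n^'n \<Rightarrow> complex^'n^'n \<Rightarrow> complex^'n^'n)"
    by (rule bilinear_conv_bounded_bilinear[THEN iffD1])
qed

interpretation smult_mat: bounded_bilinear "smult_mat :: complex \<Rightarrow> complex^'n^'n \<Rightarrow> complex^'n^'n"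
proof -
  have "bilinear (smult_mat :: complex \<Rightarrow> complex^'n^'n \<Rightarrow> complex^'n^'n)"
    by (auto simp: bilinear_def linear_iff vec_eq_iff scaleR_conv_of_real[where 'a=complex] algebra_simps)
  then show "bounded_bilinear (smult_mat :: complex \<Rightarrow> complex^'n^'n \<Rightarrow> complex^'n^'n)"
    by (rule bilinear_conv_bounded_bilinear[THEN iffD1])
qed

lemma bounded_linear_adjoint_mat: "bounded_linear (adjoint_mat :: complex^'n^'n \<Rightarrow> complex^'n^'n)"
  by (rule linear_conv_bounded_linear[THEN iffD1]) (simp add: linear_iff vec_eq_iff)

lemma adjoint_mat_zero [simp]: "adjoint_mat 0 = 0"
  by (simp add: vec_eq_iff)

lemma adjoint_mat_add: "adjoint_mat (A + B) = adjoint_mat A + adjoint_mat B"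
  by (simp add: vec_eq_iff)

lemma adjoint_mat_diff: "adjoint_mat (A - B) = adjoint_mat A - adjoint_mat B"
  by (simp add: vec_eq_iff)

lemma adjoint_mat_scaleR: "adjoint_mat (r *\<^sub>R A) = r *\<^sub>R adjoint_mat A"
  by (simp add: vec_eq_iff)

lemma bounded_linear_trace: "bounded_linear (trace :: complex^'n^'n \<Rightarrow> complex)"
  by (rule linear_conv_bounded_linear[THEN iffD1])
     (simp add: linear_iff trace_add, simp add: trace_def scaleR_sum_right)

lemma adjoint_mat_adjoint_mat [simp]: "adjoint_mat (adjoint_mat A) = A"
  by (simp add: vec_eq_iff)

lemma adjoint_mat_mult: "adjoint_mat (A ** B) = adjoint_mat B ** adjoint_mat A"
  by (simp add: vec_eq_iff matrix_matrix_mult_def mult.commute)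

lemma adjoint_mat_smult_mat: "adjoint_mat (smult_mat c A) = smult_mat (cnj c) (adjoint_mat A)"
  by (simp add: vec_eq_iff)

lemma adjoint_mat_id [simp]: "adjoint_mat (mat 1) = mat 1"
  by (simp add: vec_eq_iff mat_def)

lemma trace_adjoint_mat: "trace (adjoint_mat A) = cnj (trace A)"
  by (simp add: trace_def)

lemma trace_smult_mat: "trace (smult_mat c A) = c * trace A"
  by (simp add: trace_def sum_distrib_left)

lemma smult_mat_one [simp]: "smult_mat 1 A = A"
  and smult_mat_zero_left [simp]: "smult_mat 0 A = 0"
  and smult_mat_zero_right [simp]: "smult_mat c 0 = 0"
  and smult_mat_smult_mat [simp]: "smult_mat a (smult_mat b A) = smult_mat (a * b) A"
  by (simp_all add: vec_eq_iff mult.assoc)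

lemma smult_mat_mult_left: "smult_mat c A ** B = smult_mat c (A ** B)"
  by (simp add: vec_eq_iff matrix_matrix_mult_def sum_distrib_left mult.assoc)

lemma smult_mat_mult_right: "A ** smult_mat c B = smult_mat c (A ** B)"
  by (simp add: vec_eq_iff matrix_matrix_mult_def sum_distrib_left algebra_simps)

section \<open>The Frobenius norm\<close>

text \<open>The real inner product on \<open>complex^'n\<close> is only the real part of this form.\<close>

definition cinner :: "complex^'n \<Rightarrow> complex^'n \<Rightarrow> complex" where
  "cinner x y = (\<Sum>i\<in>UNIV. cnj (x $ i) * y $ i)"

lemma L2_set_swap:
  assumes "finite A" "finite B"
  shows "L2_set (\<lambda>i. L2_set (\<lambda>j. f i j) B) A = L2_set (\<lambda>j. L2_set (\<lambda>i. f i j) A) B"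
  unfolding L2_set_def using assms by (simp add: sum_nonneg sum.swap[of _ A B])

lemma norm_adjoint_mat: "norm (adjoint_mat A) = norm A"
  using L2_set_swap[of UNIV UNIV "\<lambda>i j. cmod (A $ i $ j)"] by (simp add: norm_vec_def)

lemma norm_transpose: "norm (transpose A) = norm (A :: complex^'n^'n)"
  using L2_set_swap[of UNIV UNIV "\<lambda>i j. cmod (A $ i $ j)"] by (simp add: norm_vec_def transpose_def)

lemma norm_sum_mult_le:
  "cmod (\<Sum>j\<in>UNIV. x $ j * y $ j) \<le> norm (x :: complex^'n) * norm y"
proof -
  have "cmod (\<Sum>j\<in>UNIV. x $ j * y $ j) \<le> (\<Sum>j\<in>UNIV. \<bar>cmod (x $ j)\<bar> * \<bar>cmod (y $ j)\<bar>)"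
    by (rule order_trans[OF norm_sum]) (simp add: norm_mult)
  also have "\<dots> \<le> norm x * norm y"
    unfolding norm_vec_def by (rule L2_set_mult_ineq)
  finally show ?thesis .
qed

lemma norm_cinner_le: "cmod (cinner x y) \<le> norm x * norm y"
proof -
  have "norm (\<chi> i. cnj (x $ i)) = norm x"
    by (simp add: norm_vec_def)
  then show ?thesis
    using norm_sum_mult_le[of "\<chi> i. cnj (x $ i)" y] by (simp add: cinner_def)
qed

lemma norm_squared_vec: "(norm x)\<^sup>2 = (\<Sum>i\<in>UNIV. (norm (x $ i))\<^sup>2)"
  by (simp add: norm_vec_def L2_set_def sum_nonneg)

lemma cinner_self: "cinner x x = of_real ((norm x)\<^sup>2)"
  by (simp only: cinner_def norm_squared_vec of_real_sum complex_norm_square mult.commute)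

lemma cinner_adjoint: "cinner x (A *v y) = cinner (adjoint_mat A *v x) y"
  by (simp add: cinner_def matrix_vector_mult_def sum_distrib_left sum_distrib_right mult_ac)
     (rule sum.swap)

lemma cinner_add_left: "cinner (x + y) z = cinner x z + cinner y z"
  and cinner_add_right: "cinner x (y + z) = cinner x y + cinner x z"
  and cinner_diff_left: "cinner (x - y) z = cinner x z - cinner y z"
  and cinner_diff_right: "cinner x (y - z) = cinner x y - cinner x z"
  and cinner_smult_left: "cinner (c *s x) y = cnj c * cinner x y"
  and cinner_smult_right: "cinner x (c *s y) = c * cinner x y"
  by (simp_all add: cinner_def sum.distrib sum_subtractf sum_distrib_left algebra_simps)

lemma cinner_sum_right: "cinner x (sum f S) = (\<Sum>i\<in>S. cinner x (f i))"
  by (induction S rule: infinite_finite_induct) (auto simp: cinner_add_right cinner_def[of x 0])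

lemma cinner_scaleR_matrix_vector:
  "cinner x ((r *\<^sub>R A) *v y) = of_real r * cinner x (A *v y)"
  by (simp add: cinner_def matrix_vector_mult_def sum_distrib_left scaleR_conv_of_real[where 'a=complex] mult_ac)

lemma matrix_vector_mult_smult: "A *v (c *s x) = c *s (A *v (x :: complex^'n))"
  by (simp add: vec_eq_iff matrix_vector_mult_def sum_distrib_left mult_ac)

lemma norm_smult_vec: "norm (c *s x) = cmod c * norm (x :: complex^'n)"
  by (simp add: norm_vec_def norm_mult L2_set_right_distrib)

lemma Im_cinner_hermitian: "hermitian_mat H \<Longrightarrow> Im (cinner x (H *v x)) = 0"
proof -
  assume "hermitian_mat H"
  then have "cnj (cinner x (H *v x)) = cinner x (H *v x)"
    using cinner_adjoint[of x H x] by (simp add: cinner_def hermitian_mat_def mult.commute)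
  then show ?thesis
    by (metis Reals_cnj_iff complex_is_Real_iff)
qed

lemma norm_matrix_vector_mult_le: "norm (A *v x) \<le> norm A * norm (x :: complex^'n)"
proof -
  have "norm ((A *v x) $ i) \<le> norm (A $ i) * norm x" for i
    using norm_sum_mult_le[of "A $ i" x] by (simp add: matrix_vector_mult_def)
  then have "norm (A *v x) \<le> L2_set (\<lambda>i. norm (A $ i) * norm x) UNIV"
    unfolding norm_vec_def[of "A *v x"] by (intro L2_set_mono) auto
  also have "\<dots> = norm A * norm x"
    by (simp add: norm_vec_def[of A] L2_set_left_distrib)
  finally show ?thesis .
qed

lemma norm_matrix_mult_le: "norm (A ** B) \<le> norm A * norm (B :: complex^'n^'n)"
proof -
  have "(A ** B) $ i = transpose B *v A $ i" for i
    by (simp add: vec_eq_iff matrix_matrix_mult_def matrix_vector_mult_def transpose_def mult.commute)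
  then have "norm ((A ** B) $ i) \<le> norm (A $ i) * norm B" for i
    using norm_matrix_vector_mult_le[of "transpose B" "A $ i"] by (simp add: norm_transpose mult.commute)
  then have "norm (A ** B) \<le> L2_set (\<lambda>i. norm (A $ i) * norm B) UNIV"
    unfolding norm_vec_def[of "A ** B"] by (intro L2_set_mono) auto
  also have "\<dots> = norm A * norm B"
    by (simp add: norm_vec_def[of A] L2_set_left_distrib)
  finally show ?thesis .
qed

lemma norm_trace_mult_le: "cmod (trace (A ** B)) \<le> norm A * norm (B :: complex^'n^'n)"
proof -
  have "cmod (trace (A ** B)) = cmod (\<Sum>i\<in>UNIV. \<Sum>j\<in>UNIV. A $ i $ j * transpose B $ i $ j)"
    by (simp add: trace_def matrix_matrix_mult_def transpose_def)
  also have "\<dots> \<le> (\<Sum>i\<in>UNIV. \<bar>norm (A $ i)\<bar> * \<bar>norm (transpose B $ i)\<bar>)"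
    by (rule order_trans[OF norm_sum]) (simp add: sum_mono norm_sum_mult_le)
  also have "\<dots> \<le> norm A * norm B"
    using L2_set_mult_ineq[of "\<lambda>i. norm (A $ i)" "\<lambda>i. norm (transpose B $ i)" UNIV]
    by (simp add: norm_transpose flip: norm_vec_def)
  finally show ?thesis .
qed

lemma trace_adjoint_mult_self: "trace (adjoint_mat A ** A) = of_real ((norm A)\<^sup>2)"
proof -
  have "trace (adjoint_mat A ** A) = (\<Sum>j\<in>UNIV. cinner (transpose A $ j) (transpose A $ j))"
    by (simp add: trace_def matrix_matrix_mult_def cinner_def transpose_def)
  also have "\<dots> = of_real ((norm (transpose A))\<^sup>2)"
    by (simp add: cinner_self norm_squared_vec[of "transpose A"])
  finally show ?thesis by (simp add: norm_transpose)
qed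

lemma trace_mult_self_hermitian:
  "hermitian_mat L \<Longrightarrow> trace (L ** L) = of_real ((norm L)\<^sup>2)"
  using trace_adjoint_mult_self[of L] by (simp add: hermitian_mat_def)

lemma norm_smult_mat: "norm (smult_mat c A) = cmod c * norm A"
  by (simp add: norm_vec_def norm_mult L2_set_right_distrib)

lemma norm_le_of_hermitian_add:
  assumes "hermitian_mat (smult_mat w H + Z)" "hermitian_mat H" "cnj w = - w"
  shows "cmod w * norm H \<le> norm Z"
proof -
  have "smult_mat (cnj w) H + adjoint_mat Z = smult_mat w H + Z"
    using assms(1,2) by (simp add: hermitian_mat_def adjoint_mat_add adjoint_mat_smult_mat)
  then have "smult_mat (2 * w) H = adjoint_mat Z - Z"
    unfolding vec_eq_iff by (simp add: assms(3) algebra_simps)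
  then have "2 * (cmod w * norm H) = norm (adjoint_mat Z - Z)"
    by (metis norm_smult_mat norm_mult norm_numeral mult.assoc)
  also have "\<dots> \<le> 2 * norm Z"
    using norm_triangle_ineq4[of "adjoint_mat Z" Z] by (simp add: norm_adjoint_mat)
  finally show ?thesis
    by simp
qed

lemma norm_hermitian_part_isotropic:
  assumes "trace (A ** A) = 0"
  shows "(norm (smult_mat w A + smult_mat (cnj w) (adjoint_mat A)))\<^sup>2 = 2 * (cmod w)\<^sup>2 * (norm A)\<^sup>2"
proof -
  define M where "M = smult_mat w A + smult_mat (cnj w) (adjoint_mat A)"
  have "trace (adjoint_mat M ** M) = (cnj w * w) * trace (adjoint_mat A ** A)
      + (cnj w * cnj w) * trace (adjoint_mat A ** adjoint_mat A) + (w * w) * trace (A ** A)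
      + (w * cnj w) * trace (A ** adjoint_mat A)"
    by (simp add: M_def adjoint_mat_add adjoint_mat_smult_mat matrix_mult.add_left matrix_mult.add_right
        smult_mat_mult_left smult_mat_mult_right trace_add trace_smult_mat algebra_simps)
  also have "trace (adjoint_mat A ** adjoint_mat A) = 0"
    using assms by (simp add: trace_adjoint_mat flip: adjoint_mat_mult)
  also have "trace (A ** adjoint_mat A) = trace (adjoint_mat A ** A)"
    by (rule trace_mul_sym)
  finally have "trace (adjoint_mat M ** M) = of_real (2 * (cmod w)\<^sup>2 * (norm A)\<^sup>2)"
    using assms by (simp add: trace_adjoint_mult_self algebra_simps flip: complex_norm_square)
  then show ?thesis
    unfolding M_def[symmetric] trace_adjoint_mult_self of_real_eq_iff .
qed

lemma linear_apply_channel: "linear (apply_channel K m t)"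
  by (simp add: linear_iff apply_channel_def matrix_mult.add_left matrix_mult.add_right
      matrix_mult.scaleR_left matrix_mult.scaleR_right sum.distrib scaleR_sum_right)

lemma linear_apply_channel_iterate: "linear (apply_channel K m t ^^ N)"
proof (induction N)
  case (Suc N)
  show ?case
    using linear_compose[OF Suc.IH linear_apply_channel] by (simp add: o_def)
qed (simp add: bounded_linear.linear)

lemma apply_channel_smult_mat:
  "apply_channel K m t (smult_mat c A) = smult_mat c (apply_channel K m t A)"
  by (simp add: apply_channel_def smult_mat_mult_left smult_mat_mult_right smult_mat.sum_right)

lemma apply_channel_iterate_smult_mat:
  "(apply_channel K m t ^^ N) (smult_mat c A) = smult_mat c ((apply_channel K m t ^^ N) A)"
  by (induction N) (simp_all add: apply_channel_smult_mat)

lemma adjoint_mat_sum: "adjoint_mat (sum f S) = (\<Sum>i\<in>S. adjoint_mat (f i))"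
  by (induction S rule: infinite_finite_induct) (simp_all add: adjoint_mat_add)

lemma apply_channel_adjoint_mat:
  "apply_channel K m t (adjoint_mat A) = adjoint_mat (apply_channel K m t A)"
  by (simp add: apply_channel_def adjoint_mat_sum adjoint_mat_mult matrix_mul_assoc)

lemma apply_channel_iterate_adjoint_mat:
  "(apply_channel K m t ^^ N) (adjoint_mat A) = adjoint_mat ((apply_channel K m t ^^ N) A)"
  by (induction N) (simp_all add: apply_channel_adjoint_mat)

lemma hermitian_apply_channel_iterate:
  "hermitian_mat H \<Longrightarrow> hermitian_mat ((apply_channel K m t ^^ N) H)"
  by (simp add: hermitian_mat_def flip: apply_channel_iterate_adjoint_mat)

lemma hermitian_eigenvalue_real:
  assumes "hermitian_mat H" "H \<noteq> 0" "apply_channel K m t H = smult_mat l H"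
  shows "cnj l = l"
proof -
  have "adjoint_mat (apply_channel K m t H) = apply_channel K m t H"
    using assms(1) by (simp add: hermitian_mat_def flip: apply_channel_adjoint_mat)
  then have "adjoint_mat (smult_mat l H) = smult_mat l H"
    by (simp only: assms(3))
  then have "smult_mat (cnj l) H = smult_mat l H"
    using assms(1) by (simp add: adjoint_mat_smult_mat hermitian_mat_def)
  then have entries: "cnj l * H $ i $ j = l * H $ i $ j" for i j
    by (metis smult_mat_nth)
  obtain i j where "H $ i $ j \<noteq> 0"
    using assms(2) by (metis vec_eq_iff zero_index)
  with entries[of i j] show ?thesis
    by simp
qed

lemma apply_channel_iterate_id:
  "unital_channel K m t \<Longrightarrow> (apply_channel K m t ^^ N) (mat 1) = mat 1"
  by (induction N) (simp_all add: unital_channel_def)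

lemma liouville_mult_vec_mat:
  "liouville K m t *v vec_mat X = vec_mat (apply_channel K m t X)"
proof -
  have "(liouville K m t *v vec_mat X) $ (a, b) = vec_mat (apply_channel K m t X) $ (a, b)" for a b
  proof -
    have "(liouville K m t *v vec_mat X) $ (a, b) =
      (\<Sum>q\<in>UNIV \<times> UNIV. (\<Sum>i<m. K i t $ a $ fst q * cnj (K i t $ b $ snd q)) * X $ fst q $ snd q)"
      by (simp add: matrix_vector_mult_def liouville_def vec_mat_def)
    also have "\<dots> = (\<Sum>l\<in>UNIV. \<Sum>k\<in>UNIV. (\<Sum>i<m. K i t $ a $ l * cnj (K i t $ b $ k)) * X $ l $ k)"
      by (simp add: sum.cartesian_product split_def)
    also have "\<dots> = (\<Sum>l\<in>UNIV. \<Sum>k\<in>UNIV. \<Sum>i<m. K i t $ a $ l * X $ l $ k * cnj (K i t $ b $ k))"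
      by (simp add: sum_distrib_left sum_distrib_right mult_ac)
    also have "\<dots> = (\<Sum>k\<in>UNIV. \<Sum>i<m. \<Sum>l\<in>UNIV. K i t $ a $ l * X $ l $ k * cnj (K i t $ b $ k))"
      by (subst sum.swap) (simp add: sum.swap[of _ UNIV "{..<m}"])
    also have "\<dots> = (\<Sum>i<m. \<Sum>k\<in>UNIV. \<Sum>l\<in>UNIV. K i t $ a $ l * X $ l $ k * cnj (K i t $ b $ k))"
      by (rule sum.swap)
    also have "\<dots> = vec_mat (apply_channel K m t X) $ (a, b)"
      by (simp add: vec_mat_def apply_channel_def matrix_matrix_mult_def sum_distrib_right)
    finally show ?thesis .
  qed
  then show ?thesis by (simp add: vec_eq_iff)
qed

lemma apply_channel_eigen:
  assumes "liouville K m t *v vec_mat X = c *s vec_mat X"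
  shows "apply_channel K m t X = smult_mat c X"
proof -
  have "vec_mat (apply_channel K m t X) = c *s vec_mat X"
    using assms by (simp only: liouville_mult_vec_mat)
  then show ?thesis
    by (simp add: vec_eq_iff vec_mat_def)
qed

section \<open>Unital channels have bounded iterates\<close>

lemma cinner_apply_channel:
  "cinner x (apply_channel K m t X *v y) =
     (\<Sum>i<m. cinner (adjoint_mat (K i t) *v x) (X *v (adjoint_mat (K i t) *v y)))"
proof -
  have "apply_channel K m t X *v y = (\<Sum>i<m. K i t *v (X *v (adjoint_mat (K i t) *v y)))"
    by (induction m)
       (simp_all add: apply_channel_def matrix_vector_mult_add_rdistrib flip: matrix_vector_mul_assoc)
  then show ?thesis
    by (simp add: cinner_sum_right cinner_adjoint)
qed

lemma unital_channel_sum_norm: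
  assumes "unital_channel K m t"
  shows "(\<Sum>i<m. (norm (adjoint_mat (K i t) *v x))\<^sup>2) = (norm x)\<^sup>2"
proof -
  have "cinner x (apply_channel K m t (mat 1) *v x) = cinner x x"
    using assms by (simp add: unital_channel_def)
  then have "(of_real (\<Sum>i<m. (norm (adjoint_mat (K i t) *v x))\<^sup>2) :: complex) = of_real ((norm x)\<^sup>2)"
    by (simp add: cinner_apply_channel cinner_self)
  then show ?thesis
    using of_real_eq_iff by blast
qed

definition numerical_radius_le :: "complex^'n^'n \<Rightarrow> real \<Rightarrow> bool" where
  "numerical_radius_le A c \<longleftrightarrow> (\<forall>x. cmod (cinner x (A *v x)) \<le> c * (norm x)\<^sup>2)"

lemma numerical_radius_le_norm: "numerical_radius_le A (norm A)"
  unfolding numerical_radius_le_def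
proof
  fix x
  have "cmod (cinner x (A *v x)) \<le> norm x * (norm A * norm x)"
    by (rule order_trans[OF norm_cinner_le]) (simp add: mult_left_mono norm_matrix_vector_mult_le)
  then show "cmod (cinner x (A *v x)) \<le> norm A * (norm x)\<^sup>2"
    by (simp add: power2_eq_square mult_ac)
qed

text \<open>Unitality \<open>\<Sum>\<^sub>i K\<^sub>i K\<^sub>i\<^sup>\<dagger> = I\<close> splits \<open>\<parallel>x\<parallel>\<^sup>2\<close> among the vectors \<open>K\<^sub>i\<^sup>\<dagger> x\<close>.\<close>

lemma numerical_radius_le_apply_channel:
  assumes "unital_channel K m t" "numerical_radius_le A c"
  shows "numerical_radius_le (apply_channel K m t A) c"
  unfolding numerical_radius_le_def
proof
  fix x
  have "cmod (cinner x (apply_channel K m t A *v x))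
     \<le> (\<Sum>i<m. cmod (cinner (adjoint_mat (K i t) *v x) (A *v (adjoint_mat (K i t) *v x))))"
    unfolding cinner_apply_channel by (rule norm_sum)
  also have "\<dots> \<le> (\<Sum>i<m. c * (norm (adjoint_mat (K i t) *v x))\<^sup>2)"
    using assms(2) by (intro sum_mono) (simp add: numerical_radius_le_def)
  also have "\<dots> = c * (norm x)\<^sup>2"
    by (simp add: unital_channel_sum_norm[OF assms(1)] flip: sum_distrib_left)
  finally show "cmod (cinner x (apply_channel K m t A *v x)) \<le> c * (norm x)\<^sup>2" .
qed

lemma cinner_polarization:
  "4 * cinner x (A *v y) =
     (cinner (x + y) (A *v (x + y)) - cinner (x - y) (A *v (x - y)))
   - \<i> * (cinner (x + \<i> *s y) (A *v (x + \<i> *s y)) - cinner (x - \<i> *s y) (A *v (x - \<i> *s y)))"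
  by (simp add: matrix_vector_mult_smult
      cinner_add_left cinner_add_right cinner_diff_left cinner_diff_right cinner_smult_left
      cinner_smult_right algebra_simps)

lemma parallelogram_vec:
  "(norm (x + y))\<^sup>2 + (norm (x - y))\<^sup>2 = 2 * (norm x)\<^sup>2 + 2 * (norm (y :: complex^'n))\<^sup>2"
  by (simp add: power2_norm_eq_inner inner_add inner_diff inner_commute)

lemma norm_cinner_le_numerical_radius:
  assumes "numerical_radius_le A c"
  shows "cmod (cinner x (A *v y)) \<le> c * ((norm x)\<^sup>2 + (norm y)\<^sup>2)"
proof -
  let ?q = "\<lambda>u. cinner u (A *v u)"
  have q: "cmod (?q u) \<le> c * (norm u)\<^sup>2" for u
    using assms by (simp add: numerical_radius_le_def)
  have "4 * cmod (cinner x (A *v y))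
      = cmod ((?q (x + y) - ?q (x - y)) - \<i> * (?q (x + \<i> *s y) - ?q (x - \<i> *s y)))"
    by (simp add: norm_mult flip: cinner_polarization)
  also have "\<dots> \<le> cmod (?q (x + y) - ?q (x - y)) + cmod (?q (x + \<i> *s y) - ?q (x - \<i> *s y))"
    by (rule order_trans[OF norm_triangle_ineq4]) (simp add: norm_mult)
  also have "\<dots> \<le> cmod (?q (x + y)) + cmod (?q (x - y)) + (cmod (?q (x + \<i> *s y)) + cmod (?q (x - \<i> *s y)))"
    by (intro add_mono norm_triangle_ineq4)
  finally have "cmod (cinner x (A *v y))
      \<le> (cmod (?q (x + y)) + cmod (?q (x - y)) + cmod (?q (x + \<i> *s y)) + cmod (?q (x - \<i> *s y))) / 4"
    by simp
  also have "\<dots> \<le> c * (((norm (x + y))\<^sup>2 + (norm (x - y))\<^sup>2)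
                 + ((norm (x + \<i> *s y))\<^sup>2 + (norm (x - \<i> *s y))\<^sup>2)) / 4"
    using q[of "x + y"] q[of "x - y"] q[of "x + \<i> *s y"] q[of "x - \<i> *s y"] by (simp add: algebra_simps)
  also have "\<dots> = c * ((norm x)\<^sup>2 + (norm y)\<^sup>2)"
    using parallelogram_vec[of x y] parallelogram_vec[of x "\<i> *s y"] by (simp add: norm_smult_vec)
  finally show ?thesis .
qed

lemma norm_le_numerical_radius:
  fixes A :: "complex^'n^'n"
  assumes "numerical_radius_le A c"
  shows "norm A \<le> 2 * c * CARD('n)"
proof -
  have "A *v axis j 1 = (\<chi> k. A $ k $ j)" for j
    by (simp add: vec_eq_iff matrix_vector_mult_def axis_def if_distrib[where f="\<lambda>x. _ * x"] cong: if_cong)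
  then have "A $ i $ j = cinner (axis i 1) (A *v axis j 1)" for i j
    by (simp add: cinner_def axis_def if_distrib[where f="\<lambda>x. cnj x * _"] cong: if_cong)
  moreover have "norm (axis i (1::complex) :: complex^'n) = 1" for i
  proof -
    have "(\<Sum>k\<in>UNIV. (norm (axis i (1::complex) $ k))\<^sup>2) = (\<Sum>k\<in>UNIV. if k = i then 1 else (0::real))"
      by (rule sum.cong) (auto simp: axis_def)
    then show ?thesis
      by (simp add: norm_vec_def L2_set_def)
  qed
  ultimately have entry: "cmod (A $ i $ j) \<le> 2 * c" for i j
    using norm_cinner_le_numerical_radius[OF assms, of "axis i 1" "axis j 1"] by simp
  then have "norm (A $ i) \<le> L2_set (\<lambda>j. 2 * c) (UNIV :: 'n set)" for i
    unfolding norm_vec_def by (intro L2_set_mono) auto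
  then have "norm A \<le> L2_set (\<lambda>i. L2_set (\<lambda>j. 2 * c) (UNIV :: 'n set)) (UNIV :: 'n set)"
    unfolding norm_vec_def[of A] by (intro L2_set_mono) auto
  moreover have "0 \<le> c"
    using entry[of undefined undefined] norm_ge_zero[of "A $ undefined $ undefined"] by linarith
  ultimately show ?thesis
    by (simp add: L2_set_constant mult.assoc[symmetric] mult.commute[of _ "2 * c"]) (simp add: mult_ac)
qed

lemma norm_apply_channel_iterate_le:
  fixes A :: "complex^'n^'n"
  assumes "unital_channel K m t"
  shows "norm ((apply_channel K m t ^^ N) A) \<le> 2 * CARD('n) * norm A"
proof -
  have "numerical_radius_le ((apply_channel K m t ^^ N) A) (norm A)"
    by (induction N) (simp_all add: numerical_radius_le_norm numerical_radius_le_apply_channel assms)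
  then show ?thesis
    by (auto dest: norm_le_numerical_radius simp: mult_ac)
qed

definition channel_deriv ::
  "(nat \<Rightarrow> real \<Rightarrow> complex^'n^'n) \<Rightarrow> (nat \<Rightarrow> complex^'n^'n) \<Rightarrow> nat \<Rightarrow> real
     \<Rightarrow> complex^'n^'n \<Rightarrow> complex^'n^'n" where
  "channel_deriv K K' m t X = (\<Sum>i<m. K' i ** X ** adjoint_mat (K i t) + K i t ** X ** adjoint_mat (K' i))"

lemma linear_channel_deriv: "linear (channel_deriv K K' m t)"
  by (simp add: linear_iff channel_deriv_def matrix_mult.add_left matrix_mult.add_right
      matrix_mult.scaleR_left matrix_mult.scaleR_right sum.distrib scaleR_sum_right algebra_simps)

lemma channel_deriv_smult_mat:
  "channel_deriv K K' m t (smult_mat c A) = smult_mat c (channel_deriv K K' m t A)"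
  by (simp add: channel_deriv_def smult_mat_mult_left smult_mat_mult_right smult_mat.sum_right
      smult_mat.add_right)

lemma has_vector_derivative_apply_channel:
  assumes K: "\<forall>i<m. (K i has_vector_derivative K' i) (at t)"
    and f: "(f has_vector_derivative f') (at t)"
  shows "((\<lambda>s. apply_channel K m s (f s)) has_vector_derivative
           apply_channel K m t f' + channel_deriv K K' m t (f t)) (at t)"
proof -
  have "((\<lambda>s. K i s ** f s ** adjoint_mat (K i s)) has_vector_derivative
      K i t ** f' ** adjoint_mat (K i t) + (K' i ** f t ** adjoint_mat (K i t) + K i t ** f t ** adjoint_mat (K' i)))
      (at t)" if "i < m" for i
  proof -
    have Ki: "(K i has_vector_derivative K' i) (at t)"
      using K \<open>i < m\<close> by blast
    have "((\<lambda>s. K i s ** f s) has_vector_derivative K i t ** f' + K' i ** f t) (at t)"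
      using matrix_mult.has_vector_derivative[OF Ki f] .
    from matrix_mult.has_vector_derivative[OF this
        bounded_linear.has_vector_derivative[OF bounded_linear_adjoint_mat Ki]]
    show ?thesis
      by (simp add: matrix_mult.add_left algebra_simps)
  qed
  then have "((\<lambda>s. \<Sum>i<m. K i s ** f s ** adjoint_mat (K i s)) has_vector_derivative
      (\<Sum>i<m. K i t ** f' ** adjoint_mat (K i t)
        + (K' i ** f t ** adjoint_mat (K i t) + K i t ** f t ** adjoint_mat (K' i)))) (at t)"
    by (intro has_vector_derivative_sum) auto
  then show ?thesis
    by (simp add: apply_channel_def channel_deriv_def sum.distrib)
qed

lemma hermitian_vector_derivative:
  assumes "\<forall>s. hermitian_mat (f s)" "(f has_vector_derivative f') (at t)"
  shows "hermitian_mat f'"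
proof -
  have "((\<lambda>s. adjoint_mat (f s)) has_vector_derivative adjoint_mat f') (at t)"
    by (rule bounded_linear.has_vector_derivative[OF bounded_linear_adjoint_mat assms(2)])
  then have "(f has_vector_derivative adjoint_mat f') (at t)"
    using assms(1) by (simp add: hermitian_mat_def)
  then show ?thesis
    unfolding hermitian_mat_def using assms(2) by (rule vector_derivative_unique_at)
qed

lemma unimodular_log_derivative_imaginary:
  fixes f :: "real \<Rightarrow> complex"
  assumes "\<forall>s. norm (f s) = 1" "(f has_vector_derivative f') (at t)"
  shows "Re (f' / f t) = 0"
proof -
  have "((\<lambda>s. f s * cnj (f s)) has_vector_derivative f t * cnj f' + f' * cnj (f t)) (at t)"
    using assms(2) by (intro has_vector_derivative_mult has_vector_derivative_cnj)
  moreover have "((\<lambda>s. f s * cnj (f s)) has_vector_derivative 0) (at t)"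
    using assms(1) by (simp flip: complex_norm_square)
  ultimately have "f t * cnj f' + f' * cnj (f t) = 0"
    by (rule vector_derivative_unique_at)
  then have "Re (f t * cnj f' + f' * cnj (f t)) = 0"
    by simp
  then have "Re (f' * cnj (f t)) = 0"
    by (simp add: algebra_simps)
  then show ?thesis
    using assms(1) by (simp add: complex_div_cnj[of f'] flip: complex_norm_square)
qed

section \<open>Perturbations of the maximally mixed state\<close>

lemma trace_scaleR: "trace (r *\<^sub>R A) = of_real r * trace (A :: complex^'n^'n)"
  by (simp add: trace_def sum_distrib_left scaleR_conv_of_real[where 'a=complex])

lemma norm_trace_mult3_le:
  fixes A B C :: "complex^'n^'n"
  shows "cmod (trace (A ** B ** C)) \<le> norm A * norm B * norm C"
  by (rule order_trans[OF norm_trace_mult_le mult_right_mono[OF norm_matrix_mult_le norm_ge_zero]])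

lemma anticommutator_scaleR_id:
  fixes Y L :: "complex^'n^'n"
  shows "(a *\<^sub>R mat 1 + e *\<^sub>R Y) ** L + L ** (a *\<^sub>R mat 1 + e *\<^sub>R Y) = (2 * a) *\<^sub>R L + e *\<^sub>R (Y ** L + L ** Y)"
proof -
  have "(2 * a) *\<^sub>R L = a *\<^sub>R L + a *\<^sub>R L"
    by (simp only: mult_2 scaleR_add_left)
  then show ?thesis
    by (simp add: matrix_mult.add_left matrix_mult.add_right matrix_mult.scaleR_left
        matrix_mult.scaleR_right scaleR_add_right add_ac)
qed

lemma re_trace_anticommutator_ge:
  assumes "0 \<le> e" "e * norm Y \<le> a / 4"
  shows "(3 * a / 2) * (norm L)\<^sup>2
    \<le> Re (trace (adjoint_mat L ** ((a *\<^sub>R mat 1 + e *\<^sub>R Y) ** L + L ** (a *\<^sub>R mat 1 + e *\<^sub>R Y))))"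
proof -
  let ?t = "trace (adjoint_mat L ** (Y ** L)) + trace (adjoint_mat L ** (L ** Y))"
  have expand: "trace (adjoint_mat L ** ((a *\<^sub>R mat 1 + e *\<^sub>R Y) ** L + L ** (a *\<^sub>R mat 1 + e *\<^sub>R Y)))
      = of_real (2 * a * (norm L)\<^sup>2) + of_real e * ?t"
    unfolding anticommutator_scaleR_id
    by (simp add: matrix_mult.add_right matrix_mult.scaleR_right trace_add trace_scaleR
        trace_adjoint_mult_self)
  have "cmod ?t \<le> 2 * norm Y * (norm L)\<^sup>2"
    using norm_trace_mult3_le[of "adjoint_mat L" Y L] norm_trace_mult3_le[of "adjoint_mat L" L Y]
    unfolding matrix_mul_assoc
    by (intro order_trans[OF norm_triangle_ineq]) (simp add: norm_adjoint_mat power2_eq_square mult_ac)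
  then have "e * cmod ?t \<le> e * (2 * norm Y * (norm L)\<^sup>2)"
    using assms(1) by (rule mult_left_mono)
  also have "\<dots> = 2 * (e * norm Y) * (norm L)\<^sup>2"
    by (simp add: mult_ac)
  also have "\<dots> \<le> 2 * (a / 4) * (norm L)\<^sup>2"
    using assms(2) by (intro mult_right_mono mult_left_mono) auto
  finally have small: "e * cmod ?t \<le> 2 * (a / 4) * (norm L)\<^sup>2" .
  have "- (e * cmod ?t) \<le> Re (of_real e * ?t)"
    using abs_Re_le_cmod[of "of_real e * ?t"] assms(1) by (simp add: norm_mult)
  with small show ?thesis
    unfolding expand by simp
qed

lemma anticommutator_surj:
  fixes Y :: "complex^'n^'n"
  assumes "0 < a" "0 \<le> e" "e * norm Y \<le> a / 4"
  shows "surj (\<lambda>L. (a *\<^sub>R mat 1 + e *\<^sub>R Y) ** L + L ** (a *\<^sub>R mat 1 + e *\<^sub>R Y))"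
    (is "surj ?\<Phi>")
proof (rule linear_inj_imp_surj)
  show lin: "linear ?\<Phi>"
    by (intro bounded_linear.linear bounded_linear_add matrix_mult.bounded_linear_left
        matrix_mult.bounded_linear_right)
  have kernel: "L = 0" if "?\<Phi> L = 0" for L
  proof -
    have "(3 * a / 2) * (norm L)\<^sup>2 \<le> 0"
      using re_trace_anticommutator_ge[OF assms(2,3), of L] that by (simp add: trace_def)
    then show ?thesis
      using assms(1) by (simp add: mult_le_0_iff)
  qed
  show "inj ?\<Phi>"
  proof (rule injI)
    fix X Z
    assume "?\<Phi> X = ?\<Phi> Z"
    then have "?\<Phi> (X - Z) = 0"
      by (simp add: linear_diff[OF lin])
    then show "X = Z"
      using kernel[of "X - Z"] by simp
  qed
qed

lemma sld_exists:
  assumes "0 < a" "0 \<le> e" "e * norm Y \<le> a / 4" "hermitian_mat Y" "hermitian_mat \<rho>'"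
  shows "\<exists>L. hermitian_mat L \<and>
    2 *\<^sub>R \<rho>' = (a *\<^sub>R mat 1 + e *\<^sub>R Y) ** L + L ** (a *\<^sub>R mat 1 + e *\<^sub>R Y)"
proof -
  define \<Phi> where "\<Phi> L = (a *\<^sub>R mat 1 + e *\<^sub>R Y) ** L + L ** (a *\<^sub>R mat 1 + e *\<^sub>R Y)" for L
  have lin: "linear \<Phi>"
    unfolding \<Phi>_def[abs_def]
    by (intro bounded_linear.linear bounded_linear_add matrix_mult.bounded_linear_left
        matrix_mult.bounded_linear_right)
  obtain L0 where "2 *\<^sub>R \<rho>' = \<Phi> L0"
    using surjD[OF anticommutator_surj[OF assms(1-3)]] unfolding \<Phi>_def by blast
  then have L0: "\<Phi> L0 = 2 *\<^sub>R \<rho>'"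
    by simp
  have "\<Phi> (adjoint_mat X) = adjoint_mat (\<Phi> X)" for X
    using assms(4) by (simp add: \<Phi>_def adjoint_mat_add adjoint_mat_mult adjoint_mat_scaleR
        hermitian_mat_def add.commute)
  then have L0_adj: "\<Phi> (adjoint_mat L0) = 2 *\<^sub>R \<rho>'"
    using assms(5) by (simp add: L0 adjoint_mat_scaleR hermitian_mat_def)
  have "\<Phi> ((1/2) *\<^sub>R (L0 + adjoint_mat L0)) = (1/2) *\<^sub>R (\<Phi> L0 + \<Phi> (adjoint_mat L0))"
    by (simp add: linear_add[OF lin] linear_cmul[OF lin])
  also have "\<dots> = 2 *\<^sub>R \<rho>'"
    by (simp add: L0 L0_adj scaleR_2)
  moreover have "hermitian_mat ((1/2) *\<^sub>R (L0 + adjoint_mat L0))"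
    by (simp add: hermitian_mat_def adjoint_mat_scaleR adjoint_mat_add add.commute)
  ultimately show ?thesis
    unfolding \<Phi>_def by (metis (no_types))
qed

lemma re_trace_mult_square_ge:
  assumes "0 \<le> e" "e * norm Y \<le> a / 4" "hermitian_mat L"
  shows "(3 * a / 4) * (norm L)\<^sup>2 \<le> Re (trace ((a *\<^sub>R mat 1 + e *\<^sub>R Y) ** L ** L))"
proof -
  let ?t = "trace (Y ** L ** L)"
  have expand: "trace ((a *\<^sub>R mat 1 + e *\<^sub>R Y) ** L ** L) = of_real (a * (norm L)\<^sup>2) + of_real e * ?t"
    using trace_mult_self_hermitian[OF assms(3)]
    by (simp add: matrix_mult.add_left matrix_mult.scaleR_left trace_add trace_scaleR matrix_mul_assoc)
  have "e * cmod ?t \<le> e * (norm Y * norm L * norm L)"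
    using norm_trace_mult3_le assms(1) by (rule mult_left_mono)
  also have "\<dots> \<le> (a / 4) * (norm L)\<^sup>2"
    using mult_right_mono[OF assms(2), of "(norm L)\<^sup>2"] by (simp add: power2_eq_square mult_ac)
  finally have small: "e * cmod ?t \<le> (a / 4) * (norm L)\<^sup>2" .
  have "- (e * cmod ?t) \<le> Re (of_real e * ?t)"
    using abs_Re_le_cmod[of "of_real e * ?t"] assms(1) by (simp add: norm_mult)
  with small show ?thesis
    unfolding expand by simp
qed

lemma norm_anticommutator_le:
  fixes Y L :: "complex^'n^'n"
  assumes "0 \<le> a" "0 \<le> e" "e * norm Y \<le> a / 4"
  shows "norm ((a *\<^sub>R mat 1 + e *\<^sub>R Y) ** L + L ** (a *\<^sub>R mat 1 + e *\<^sub>R Y)) \<le> (5 * a / 2) * norm L"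
proof -
  have "norm ((2 * a) *\<^sub>R L + e *\<^sub>R (Y ** L + L ** Y)) \<le> 2 * a * norm L + e * (norm (Y ** L) + norm (L ** Y))"
    using assms(1,2) norm_triangle_ineq[of "Y ** L" "L ** Y"]
    by (intro order_trans[OF norm_triangle_ineq] add_mono) (auto intro: mult_left_mono)
  also have "\<dots> \<le> 2 * a * norm L + e * (2 * norm Y * norm L)"
    using norm_matrix_mult_le[of Y L] norm_matrix_mult_le[of L Y] assms(2)
    by (intro add_left_mono mult_left_mono) (simp_all add: mult_ac)
  also have "\<dots> \<le> 2 * a * norm L + 2 * (a / 4) * norm L"
    using mult_right_mono[OF assms(3), of "2 * norm L"] by (simp add: mult_ac)
  finally show ?thesis
    by (simp add: anticommutator_scaleR_id)
qed

lemma re_trace_sld_ge: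
  assumes "0 < a" "0 \<le> e" "e * norm Y \<le> a / 4" "hermitian_mat L"
    and "2 *\<^sub>R \<rho>' = (a *\<^sub>R mat 1 + e *\<^sub>R Y) ** L + L ** (a *\<^sub>R mat 1 + e *\<^sub>R Y)"
  shows "(norm \<rho>')\<^sup>2 / (8 * a) \<le> Re (trace ((a *\<^sub>R mat 1 + e *\<^sub>R Y) ** L ** L))"
proof -
  have "norm \<rho>' \<le> (5 * a / 4) * norm L"
    using norm_anticommutator_le[of a e Y L] assms(1-3) by (simp add: flip: assms(5))
  then have "(norm \<rho>')\<^sup>2 / (8 * a) \<le> ((5 * a / 4) * norm L)\<^sup>2 / (8 * a)"
    using assms(1) by (intro divide_right_mono power_mono) auto
  also have "\<dots> = (25 / 128) * a * (norm L)\<^sup>2"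
    using assms(1) by (simp add: power2_eq_square field_simps)
  also have "\<dots> \<le> (3 * a / 4) * (norm L)\<^sup>2"
    using assms(1) by (intro mult_right_mono) auto
  also have "\<dots> \<le> Re (trace ((a *\<^sub>R mat 1 + e *\<^sub>R Y) ** L ** L))"
    using assms(2-4) by (rule re_trace_mult_square_ge)
  finally show ?thesis .
qed

lemma qfi_lower_bound:
  assumes "0 < a" "0 \<le> e" "e * norm Y \<le> a / 4" "hermitian_mat Y" "hermitian_mat \<rho>'"
  shows "(norm \<rho>')\<^sup>2 / (8 * a) \<le> qfi (a *\<^sub>R mat 1 + e *\<^sub>R Y) \<rho>'"
proof -
  define L where "L = (SOME L. hermitian_mat L \<and>
    2 *\<^sub>R \<rho>' = (a *\<^sub>R mat 1 + e *\<^sub>R Y) ** L + L ** (a *\<^sub>R mat 1 + e *\<^sub>R Y))"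
  have "hermitian_mat L \<and> 2 *\<^sub>R \<rho>' = (a *\<^sub>R mat 1 + e *\<^sub>R Y) ** L + L ** (a *\<^sub>R mat 1 + e *\<^sub>R Y)"
    unfolding L_def using sld_exists[OF assms] by (rule someI_ex)
  then have "(norm \<rho>')\<^sup>2 / (8 * a) \<le> Re (trace ((a *\<^sub>R mat 1 + e *\<^sub>R Y) ** L ** L))"
    using re_trace_sld_ge[OF assms(1-3)] by blast
  then show ?thesis
    by (simp add: qfi_def Let_def L_def)
qed

lemma density_matrix_perturbed_id:
  fixes Y :: "complex^'n^'n"
  assumes "hermitian_mat Y" "trace Y = 0" "0 \<le> e" "e * norm Y \<le> 1 / CARD('n)"
  shows "density_matrix ((1 / CARD('n)) *\<^sub>R mat 1 + e *\<^sub>R Y)"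
proof -
  let ?\<rho> = "(1 / CARD('n)) *\<^sub>R mat 1 + e *\<^sub>R Y"
  have herm: "hermitian_mat ?\<rho>"
    using assms(1) by (simp add: hermitian_mat_def adjoint_mat_add adjoint_mat_scaleR)
  have "Re (cinner x (?\<rho> *v x)) \<ge> 0" for x
  proof -
    have "cinner x (?\<rho> *v x) = of_real ((norm x)\<^sup>2 / CARD('n)) + of_real e * cinner x (Y *v x)"
      by (simp add: matrix_vector_mult_add_rdistrib cinner_add_right cinner_scaleR_matrix_vector
          cinner_self)
    moreover have "e * cmod (cinner x (Y *v x)) \<le> (norm x)\<^sup>2 / CARD('n)"
      using mult_left_mono[OF numerical_radius_le_norm[of Y, unfolded numerical_radius_le_def, rule_format, of x] assms(3)]
        mult_right_mono[OF assms(4), of "(norm x)\<^sup>2"]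
      by (simp add: mult_ac)
    moreover have "- (e * cmod (cinner x (Y *v x))) \<le> Re (of_real e * cinner x (Y *v x))"
      using abs_Re_le_cmod[of "of_real e * cinner x (Y *v x)"] assms(3) by (simp add: norm_mult)
    ultimately show ?thesis
      by simp
  qed
  moreover have "trace ?\<rho> = 1"
    using assms(2) by (simp add: trace_add trace_scaleR trace_I)
  ultimately show ?thesis
    using herm Im_cinner_hermitian[OF herm]
    by (simp add: density_matrix_def psd_mat_def cinner_def)
qed

section \<open>Heisenberg scaling\<close>

lemma liminf_div_square_pos:
  fixes q :: "nat \<Rightarrow> real"
  assumes "0 < c" "\<forall>\<^sub>F N in sequentially. c * (real N)\<^sup>2 \<le> q N"
  shows "0 < liminf (\<lambda>N. ereal (q N / (real N)\<^sup>2))"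
proof -
  have "\<forall>\<^sub>F N in sequentially. ereal c \<le> ereal (q N / (real N)\<^sup>2)"
    using assms(2) eventually_gt_at_top[of 0] by eventually_elim (simp add: le_divide_eq)
  then have "ereal c \<le> liminf (\<lambda>N. ereal (q N / (real N)\<^sup>2))"
    by (rule Liminf_bounded)
  with assms(1) show ?thesis
    by (simp add: less_le_trans[of 0 "ereal c"])
qed

locale peripheral_eigenmatrix =
  fixes K :: "nat \<Rightarrow> real \<Rightarrow> complex^'n^'n" and m :: nat and \<theta>0 :: real
    and lam lam' :: "real \<Rightarrow> complex" and R R' :: "real \<Rightarrow> complex^'n^'n"
  assumes unital: "\<forall>\<theta>. unital_channel K m \<theta>"
    and K_diff: "\<forall>i<m. \<forall>\<theta>. K i differentiable (at \<theta>)"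
    and eig: "\<forall>\<theta>. liouville K m \<theta> *v vec_mat (R \<theta>) = lam \<theta> *s vec_mat (R \<theta>) \<and> R \<theta> \<noteq> 0"
    and peripheral: "\<forall>\<theta>. norm (lam \<theta>) = 1"
    and lam_deriv: "\<forall>\<theta>. (lam has_vector_derivative lam' \<theta>) (at \<theta>)"
    and R_deriv: "\<forall>\<theta>. (R has_vector_derivative R' \<theta>) (at \<theta>)"
    and lam'_nonzero: "lam' \<theta>0 \<noteq> 0"
begin

abbreviation E :: "real \<Rightarrow> complex^'n^'n \<Rightarrow> complex^'n^'n" where
  "E \<equiv> apply_channel K m"

definition "K' i = vector_derivative (K i) (at \<theta>0)"
definition "R0 = R \<theta>0"
definition "\<mu> = lam' \<theta>0 / lam \<theta>0"
definition "remainder N = smult_mat (lam \<theta>0 ^ N) (R' \<theta>0) - (E \<theta>0 ^^ N) (R' \<theta>0)"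

text \<open>The derivative of \<open>\<theta> \<mapsto> E\<^sub>\<theta>\<^sup>N R\<^sub>0\<close> at \<open>\<theta>\<^sub>0\<close>, obtained by differentiating
  \<open>E\<^sub>\<theta> R\<^sub>\<theta> = \<lambda>\<^sub>\<theta> R\<^sub>\<theta>\<close>.\<close>
definition "iterate_deriv N = smult_mat (of_nat N * lam \<theta>0 ^ N * \<mu>) R0 + remainder N"

lemma norm_lam [simp]: "cmod (lam t) = 1"
  using peripheral by simp

lemma lam_nonzero [simp]: "lam t \<noteq> 0"
  using norm_lam[of t] by (metis norm_zero zero_neq_one)

lemma mu_nonzero: "\<mu> \<noteq> 0"
  using lam'_nonzero by (simp add: \<mu>_def)

lemma Re_mu: "Re \<mu> = 0"
  unfolding \<mu>_def using peripheral lam_deriv by (intro unimodular_log_derivative_imaginary) auto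

lemma K_has_derivative: "i < m \<Longrightarrow> (K i has_vector_derivative K' i) (at \<theta>0)"
  unfolding K'_def using K_diff vector_derivative_works by blast

lemma channel_eigen: "E t (R t) = smult_mat (lam t) (R t)"
  using eig apply_channel_eigen by blast

lemma channel_deriv_R0:
  "channel_deriv K K' m \<theta>0 R0 = smult_mat (lam' \<theta>0) R0 + smult_mat (lam \<theta>0) (R' \<theta>0) - E \<theta>0 (R' \<theta>0)"
proof -
  have "((\<lambda>t. E t (R t)) has_vector_derivative E \<theta>0 (R' \<theta>0) + channel_deriv K K' m \<theta>0 R0) (at \<theta>0)"
    unfolding R0_def using K_has_derivative R_deriv by (intro has_vector_derivative_apply_channel) auto
  moreover have "((\<lambda>t. E t (R t)) has_vector_derivative
      smult_mat (lam \<theta>0) (R' \<theta>0) + smult_mat (lam' \<theta>0) R0) (at \<theta>0)"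
    unfolding channel_eigen R0_def using lam_deriv R_deriv by (intro smult_mat.has_vector_derivative) auto
  ultimately have "E \<theta>0 (R' \<theta>0) + channel_deriv K K' m \<theta>0 R0 = smult_mat (lam \<theta>0) (R' \<theta>0) + smult_mat (lam' \<theta>0) R0"
    by (rule vector_derivative_unique_at)
  then show ?thesis
    by (simp add: algebra_simps)
qed

lemma iterate_R0: "(E \<theta>0 ^^ N) R0 = smult_mat (lam \<theta>0 ^ N) R0"
  by (induction N) (simp_all add: apply_channel_smult_mat channel_eigen R0_def mult_ac)

lemma has_vector_derivative_iterate_R0:
  "((\<lambda>t. (E t ^^ N) R0) has_vector_derivative iterate_deriv N) (at \<theta>0)"
proof (induction N)
  case 0
  show ?case
    by (simp add: iterate_deriv_def remainder_def)
next
  case (Suc N)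
  have "((\<lambda>t. E t ((E t ^^ N) R0)) has_vector_derivative
      E \<theta>0 (iterate_deriv N) + channel_deriv K K' m \<theta>0 ((E \<theta>0 ^^ N) R0)) (at \<theta>0)"
    using K_has_derivative Suc.IH by (intro has_vector_derivative_apply_channel) auto
  moreover have "E \<theta>0 (iterate_deriv N) + channel_deriv K K' m \<theta>0 ((E \<theta>0 ^^ N) R0) = iterate_deriv (Suc N)"
    using channel_eigen[of \<theta>0] lam_nonzero[of \<theta>0]
    by (simp add: iterate_deriv_def remainder_def iterate_R0 channel_deriv_R0 channel_deriv_smult_mat
        apply_channel_smult_mat linear_add[OF linear_apply_channel] linear_diff[OF linear_apply_channel]
        linear_add[OF linear_channel_deriv] linear_diff[OF linear_channel_deriv] \<mu>_def vec_eq_iff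
        algebra_simps flip: R0_def)
  ultimately show ?case
    by simp
qed

lemma norm_remainder_le: "norm (remainder N) \<le> (1 + 2 * CARD('n)) * norm (R' \<theta>0)"
  using norm_triangle_ineq4[of "smult_mat (lam \<theta>0 ^ N) (R' \<theta>0)" "(E \<theta>0 ^^ N) (R' \<theta>0)"]
    norm_apply_channel_iterate_le[OF unital[rule_format, of \<theta>0], of N "R' \<theta>0"]
  by (simp add: remainder_def norm_smult_mat norm_power algebra_simps)

lemma R0_nonzero: "R0 \<noteq> 0"
  using eig by (simp add: R0_def)

lemma growth_bounded_if_hermitian_multiple:
  assumes H: "hermitian_mat H" and R0_eq: "R0 = smult_mat c H"
  shows "real N * (cmod \<mu> * norm H) \<le> (1 + 2 * CARD('n)) * norm (R' \<theta>0) / cmod c"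
proof -
  have c: "c \<noteq> 0" and "H \<noteq> 0"
    using R0_nonzero R0_eq by auto
  have "smult_mat c (E \<theta>0 H) = smult_mat c (smult_mat (lam \<theta>0) H)"
    using channel_eigen[of \<theta>0] by (simp add: R0_eq apply_channel_smult_mat mult.commute flip: R0_def)
  then have "E \<theta>0 H = smult_mat (lam \<theta>0) H"
    using c by (simp add: vec_eq_iff)
  then have "cnj (lam \<theta>0) = lam \<theta>0"
    by (rule hermitian_eigenvalue_real[OF H \<open>H \<noteq> 0\<close>])
  moreover have "cnj \<mu> = - \<mu>"
    using Re_mu by (simp add: complex_eq_iff)
  ultimately have w_imaginary: "cnj (of_nat N * lam \<theta>0 ^ N * \<mu>) = - (of_nat N * lam \<theta>0 ^ N * \<mu>)"
    by simp
  have "((\<lambda>t. smult_mat (1 / c) ((E t ^^ N) R0)) has_vector_derivative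
      smult_mat (1 / c) (iterate_deriv N)) (at \<theta>0)"
    using smult_mat.has_vector_derivative[OF has_vector_derivative_const has_vector_derivative_iterate_R0]
    by simp
  moreover have "smult_mat (1 / c) ((E t ^^ N) R0) = (E t ^^ N) H" for t
    using c by (simp add: R0_eq apply_channel_iterate_smult_mat)
  ultimately have "hermitian_mat (smult_mat (1 / c) (iterate_deriv N))"
    using H by (intro hermitian_vector_derivative[of "\<lambda>t. (E t ^^ N) H"])
      (simp_all add: hermitian_apply_channel_iterate)
  moreover have "smult_mat (1 / c) (iterate_deriv N)
      = smult_mat (of_nat N * lam \<theta>0 ^ N * \<mu>) H + smult_mat (1 / c) (remainder N)"
    using c by (simp add: iterate_deriv_def R0_eq smult_mat.add_right)
  ultimately have "cmod (of_nat N * lam \<theta>0 ^ N * \<mu>) * norm H \<le> norm (smult_mat (1 / c) (remainder N))"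
    using H w_imaginary by (intro norm_le_of_hermitian_add) auto
  also have "\<dots> \<le> (1 + 2 * CARD('n)) * norm (R' \<theta>0) / cmod c"
    using norm_remainder_le[of N] by (simp add: norm_smult_mat norm_divide divide_right_mono)
  finally show ?thesis
    by (simp add: norm_mult norm_power)
qed

lemma R0_not_hermitian_multiple:
  assumes "hermitian_mat H"
  shows "R0 \<noteq> smult_mat c H"
proof
  assume R0_eq: "R0 = smult_mat c H"
  then have "H \<noteq> 0"
    using R0_nonzero by auto
  then have "0 < cmod \<mu> * norm H"
    using mu_nonzero by simp
  with growth_bounded_if_hermitian_multiple[OF assms R0_eq] show False
    by (metis reals_Archimedean3 not_less)
qed

lemma trace_R0_square:
  assumes "(\<exists>A c H. (R \<longlongrightarrow> A) (at \<theta>0) \<and> hermitian_mat H \<and> A = smult_mat c H)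
             \<or> ((\<lambda>\<theta>. trace (R \<theta> ** R \<theta>)) \<longlongrightarrow> 0) (at \<theta>0)"
  shows "trace (R0 ** R0) = 0"
proof -
  have R_lim: "(R \<longlongrightarrow> R0) (at \<theta>0)"
    using has_vector_derivative_continuous[OF R_deriv[rule_format]] by (simp add: R0_def continuous_at)
  then have "((\<lambda>\<theta>. trace (R \<theta> ** R \<theta>)) \<longlongrightarrow> trace (R0 ** R0)) (at \<theta>0)"
    by (intro bounded_linear.tendsto[OF bounded_linear_trace] matrix_mult.tendsto)
  moreover have "((\<lambda>\<theta>. trace (R \<theta> ** R \<theta>)) \<longlongrightarrow> 0) (at \<theta>0)"
  proof (cases "\<exists>A c H. (R \<longlongrightarrow> A) (at \<theta>0) \<and> hermitian_mat H \<and> A = smult_mat c H")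
    case True
    then obtain A c H where "(R \<longlongrightarrow> A) (at \<theta>0)" "hermitian_mat H" "A = smult_mat c H"
      by blast
    moreover have "A = R0"
      using tendsto_unique[OF at_neq_bot \<open>(R \<longlongrightarrow> A) (at \<theta>0)\<close> R_lim] .
    ultimately show ?thesis
      using R0_not_hermitian_multiple[of H c] by simp
  next
    case False
    then show ?thesis
      using assms by blast
  qed
  ultimately show ?thesis
    using tendsto_unique[OF at_neq_bot] by blast
qed

lemma norm_iterate_deriv_hermitian_ge:
  assumes "trace (R0 ** R0) = 0"
  shows "real N * (cmod \<mu> * norm R0) - 2 * ((1 + 2 * CARD('n)) * norm (R' \<theta>0))
    \<le> norm (iterate_deriv N + adjoint_mat (iterate_deriv N))"
proof -
  define w where "w = of_nat N * lam \<theta>0 ^ N * \<mu>"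
  define M where "M = smult_mat w R0 + smult_mat (cnj w) (adjoint_mat R0)"
  have "(cmod w * norm R0)\<^sup>2 \<le> (norm M)\<^sup>2"
    unfolding M_def norm_hermitian_part_isotropic[OF assms] by (simp add: power_mult_distrib)
  then have "real N * (cmod \<mu> * norm R0) \<le> norm M"
    by (auto dest: power2_le_imp_le simp: w_def norm_mult norm_power)
  moreover have split: "iterate_deriv N + adjoint_mat (iterate_deriv N) = M + (remainder N + adjoint_mat (remainder N))"
    by (simp add: iterate_deriv_def M_def w_def adjoint_mat_add adjoint_mat_smult_mat algebra_simps)
  moreover have "norm (remainder N + adjoint_mat (remainder N)) \<le> 2 * ((1 + 2 * CARD('n)) * norm (R' \<theta>0))"
    using norm_triangle_ineq[of "remainder N" "adjoint_mat (remainder N)"] norm_remainder_le[of N]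
    by (simp add: norm_adjoint_mat)
  ultimately show ?thesis
    unfolding split using norm_diff_ineq[of M "remainder N + adjoint_mat (remainder N)"] by linarith
qed

definition "Y0 = R0 + adjoint_mat R0 - (2 * Re (trace R0) / CARD('n)) *\<^sub>R mat 1"
definition "probe e = (1 / CARD('n)) *\<^sub>R mat 1 + e *\<^sub>R Y0"

lemma hermitian_Y0: "hermitian_mat Y0"
  by (simp add: Y0_def hermitian_mat_def adjoint_mat_add adjoint_mat_diff adjoint_mat_scaleR add.commute)

lemma trace_Y0: "trace Y0 = 0"
  by (simp add: Y0_def trace_add trace_sub trace_scaleR trace_adjoint_mat trace_I complex_add_cnj)

lemma iterate_probe:
  "(E t ^^ N) (probe e) = (1 / CARD('n)) *\<^sub>R mat 1
     + e *\<^sub>R ((E t ^^ N) R0 + adjoint_mat ((E t ^^ N) R0) - (2 * Re (trace R0) / CARD('n)) *\<^sub>R mat 1)"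
  using unital
  by (simp add: probe_def Y0_def linear_add[OF linear_apply_channel_iterate]
      linear_diff[OF linear_apply_channel_iterate] linear_cmul[OF linear_apply_channel_iterate]
      apply_channel_iterate_adjoint_mat apply_channel_iterate_id)

lemma iterate_probe_at:
  "(E \<theta>0 ^^ N) (probe e) = (1 / CARD('n)) *\<^sub>R mat 1 + e *\<^sub>R (E \<theta>0 ^^ N) Y0"
  using unital
  by (simp add: probe_def linear_add[OF linear_apply_channel_iterate]
      linear_cmul[OF linear_apply_channel_iterate] apply_channel_iterate_id)

lemma has_vector_derivative_iterate_probe:
  "((\<lambda>t. (E t ^^ N) (probe e)) has_vector_derivative
     e *\<^sub>R (iterate_deriv N + adjoint_mat (iterate_deriv N))) (at \<theta>0)"
  unfolding iterate_probe
  using has_vector_derivative_iterate_R0[of N]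
    bounded_linear.has_vector_derivative[OF bounded_linear_adjoint_mat has_vector_derivative_iterate_R0[of N]]
  by (auto intro!: derivative_eq_intros)

lemma qfi_iterate_probe_ge:
  fixes e :: real
  assumes "0 \<le> e" "e * (2 * CARD('n) * norm Y0) \<le> 1 / (4 * CARD('n))"
  shows "e\<^sup>2 * CARD('n) / 8 * (norm (iterate_deriv N + adjoint_mat (iterate_deriv N)))\<^sup>2
    \<le> qfi_family (\<lambda>\<theta>. (E \<theta> ^^ N) (probe e)) \<theta>0"
proof -
  let ?D = "iterate_deriv N + adjoint_mat (iterate_deriv N)"
  have "e * norm ((E \<theta>0 ^^ N) Y0) \<le> e * (2 * CARD('n) * norm Y0)"
    using norm_apply_channel_iterate_le[OF unital[rule_format]] assms(1) by (rule mult_left_mono)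
  then have "(norm (e *\<^sub>R ?D))\<^sup>2 / (8 * (1 / CARD('n)))
      \<le> qfi ((1 / CARD('n)) *\<^sub>R mat 1 + e *\<^sub>R (E \<theta>0 ^^ N) Y0) (e *\<^sub>R ?D)"
    using assms hermitian_apply_channel_iterate[OF hermitian_Y0]
    by (intro qfi_lower_bound) (auto simp: hermitian_mat_def adjoint_mat_add adjoint_mat_scaleR add.commute)
  then show ?thesis
    using assms(1)
    by (simp add: qfi_family_def vector_derivative_at[OF has_vector_derivative_iterate_probe]
        iterate_probe_at power_mult_distrib mult_ac)
qed

lemma eventually_norm_iterate_deriv_hermitian_ge:
  assumes "trace (R0 ** R0) = 0"
  shows "\<forall>\<^sub>F N in sequentially.
    real N * (cmod \<mu> * norm R0) / 2 \<le> norm (iterate_deriv N + adjoint_mat (iterate_deriv N))"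
proof -
  define b where "b = cmod \<mu> * norm R0"
  define C where "C = 2 * ((1 + 2 * CARD('n)) * norm (R' \<theta>0))"
  have b: "0 < b"
    using mu_nonzero R0_nonzero by (simp add: b_def)
  show ?thesis
    using eventually_ge_at_top[of "nat \<lceil>2 * C / b\<rceil>"]
  proof eventually_elim
    case (elim N)
    then have "2 * C \<le> real N * b"
      using b by (simp add: divide_le_eq mult.commute)
    then show ?case
      using norm_iterate_deriv_hermitian_ge[OF assms, of N] by (simp add: b_def C_def)
  qed
qed

lemma density_matrix_probe:
  assumes "0 \<le> e" "e * norm Y0 \<le> 1 / CARD('n)"
  shows "density_matrix (probe e)"
  unfolding probe_def using hermitian_Y0 trace_Y0 assms by (rule density_matrix_perturbed_id)

lemma eventually_qfi_iterate_probe_ge: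
  fixes e :: real
  assumes "trace (R0 ** R0) = 0" "0 \<le> e" "e * (2 * CARD('n) * norm Y0) \<le> 1 / (4 * CARD('n))"
  shows "\<forall>\<^sub>F N in sequentially. e\<^sup>2 * CARD('n) / 8 * (cmod \<mu> * norm R0 / 2)\<^sup>2 * (real N)\<^sup>2
    \<le> qfi_family (\<lambda>\<theta>. (E \<theta> ^^ N) (probe e)) \<theta>0"
  using eventually_norm_iterate_deriv_hermitian_ge[OF assms(1)]
proof eventually_elim
  case (elim N)
  let ?D = "iterate_deriv N + adjoint_mat (iterate_deriv N)"
  have "(real N * (cmod \<mu> * norm R0) / 2)\<^sup>2 \<le> (norm ?D)\<^sup>2"
    using elim by (intro power_mono) auto
  then have "e\<^sup>2 * CARD('n) / 8 * (real N * (cmod \<mu> * norm R0) / 2)\<^sup>2 \<le> e\<^sup>2 * CARD('n) / 8 * (norm ?D)\<^sup>2"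
    by (intro mult_left_mono) auto
  also have "\<dots> \<le> qfi_family (\<lambda>\<theta>. (E \<theta> ^^ N) (probe e)) \<theta>0"
    using assms(2,3) by (rule qfi_iterate_probe_ge)
  finally show ?case
    by (simp add: power_mult_distrib power_divide mult_ac)
qed

lemma heisenberg_scaling:
  assumes "trace (R0 ** R0) = 0"
  shows "\<exists>\<rho>0. density_matrix \<rho>0 \<and>
    liminf (\<lambda>N. ereal (qfi_family (\<lambda>\<theta>. (E \<theta> ^^ N) \<rho>0) \<theta>0 / (real N)\<^sup>2)) > 0"
proof (intro exI conjI)
  define d where "d = real CARD('n)"
  define c where "c = norm Y0 + 1"
  define e where "e = 1 / (8 * d\<^sup>2 * c)"
  have d1: "1 \<le> d"
    by (simp add: d_def Suc_le_eq)
  have c: "0 < c"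
    by (simp add: c_def add_nonneg_pos)
  with d1 have e: "0 < e"
    by (simp add: e_def)
  have "e * (2 * d * norm Y0) \<le> e * (2 * d * c)"
    using d1 e by (simp add: c_def)
  also have "\<dots> = 1 / (4 * d)"
    using d1 c by (simp add: e_def field_simps power2_eq_square)
  finally have small: "e * (2 * d * norm Y0) \<le> 1 / (4 * d)" .
  have "e * norm Y0 \<le> e * c"
    using e by (simp add: c_def)
  also have "\<dots> = 1 / (8 * d\<^sup>2)"
    using c by (simp add: e_def)
  also have "\<dots> \<le> 1 / d"
    using d1 by (simp add: field_simps power2_eq_square)
  finally show "density_matrix (probe e)"
    using e unfolding d_def by (intro density_matrix_probe) auto
  have "0 < cmod \<mu> * norm R0"
    using mu_nonzero R0_nonzero by simp
  with e eventually_qfi_iterate_probe_ge[OF assms, of e] small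
  show "liminf (\<lambda>N. ereal (qfi_family (\<lambda>\<theta>. (E \<theta> ^^ N) (probe e)) \<theta>0 / (real N)\<^sup>2)) > 0"
    unfolding d_def
    by (intro liminf_div_square_pos[where c = "e\<^sup>2 * CARD('n) / 8 * (cmod \<mu> * norm R0 / 2)\<^sup>2"])
      (auto intro!: mult_pos_pos)
qed

end

theorem corollary2:
  fixes K :: "nat \<Rightarrow> real \<Rightarrow> complex^'n^'n" and m :: nat and \<theta>0 :: real
    and lam :: "real \<Rightarrow> complex" and lam' :: "real \<Rightarrow> complex"
    and R :: "real \<Rightarrow> complex^'n^'n" and R' :: "real \<Rightarrow> complex^'n^'n"
  assumes TP: "\<forall>\<theta>. trace_preserving K m \<theta>"
    and unital: "\<forall>\<theta>. unital_channel K m \<theta>"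
    and K_diff: "\<forall>i<m. \<forall>\<theta>. K i differentiable (at \<theta>)"
    and eig: "\<forall>\<theta>. liouville K m \<theta> *v vec_mat (R \<theta>) = lam \<theta> *s vec_mat (R \<theta>) \<and> R \<theta> \<noteq> 0"
    and peripheral: "\<forall>\<theta>. norm (lam \<theta>) = 1"
    and lam_C1: "\<forall>\<theta>. (lam has_vector_derivative lam' \<theta>) (at \<theta>)" "continuous_on UNIV lam'"
    and R_C1: "\<forall>\<theta>. (R has_vector_derivative R' \<theta>) (at \<theta>)" "continuous_on UNIV R'"
    and lam_dot: "lam' \<theta>0 \<noteq> 0"
    and cond: "(\<exists>A c H. (R \<longlongrightarrow> A) (at \<theta>0) \<and> hermitian_mat H \<and> A = smult_mat c H)
             \<or> ((\<lambda>\<theta>. trace (R \<theta> ** R \<theta>)) \<longlongrightarrow> 0) (at \<theta>0)"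
  shows "\<exists>\<rho>0. density_matrix \<rho>0 \<and>
           liminf (\<lambda>N. ereal (qfi_family (\<lambda>\<theta>. (apply_channel K m \<theta> ^^ N) \<rho>0) \<theta>0 / (real N)^2)) > 0"
proof -
  interpret peripheral_eigenmatrix K m \<theta>0 lam lam' R R'
    using unital K_diff eig peripheral lam_C1(1) R_C1(1) lam_dot by unfold_locales
  have "trace (R0 ** R0) = 0"
    using cond by (rule trace_R0_square)
  then show ?thesis
    by (rule heisenberg_scaling)
qed

end
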